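(* Let $I\subset\mathbb{B}[x^{\pm1}]$ be the zero-dimensional tropical ideal of degree $2$ corresponding to the sublattice $4\mathbb{Z}\subset\mathbb{Z}$, i.e. the tropical ideal whose polynomials of minimal support are the binomials $x^u\oplus x^v$ with $u\neq v$, $u-v\in4\mathbb{Z}$, and the trinomials $x^u\oplus x^v\oplus x^w$ with $u,v,w$ pairwise incongruent modulo $4$. Then there is no field $K$ of characteristic $2$ and ideal $J\subset K[x^{\pm1}]$ with $I=\operatorname{trop}(J)$.
   Context: $\mathbb{B}=\{\infty,0\}$ with $\oplus=\min$ and multiplication $+$. For a field $K$ and $F\in K[x_1^{\pm1},\dots,x_n^{\pm1}]$, $\operatorname{trop}(F)=\bigoplus_{\mathbf u\in\operatorname{supp}(F)}\mathbf x^{\mathbf u}\in\mathbb{B}[x_1^{\pm1},\dots,x_n^{\pm1}]$, and for an ideal $J$, $\operatorname{trop}(J)$ is the ideal generated by $\{\operatorname{trop}(F):F\in J\}$. A tropical ideal of the form $\operatorname{trop}(J)$ is realizable over $K$. Polynomials of minimal support are those whose support is minimal (under inclusion) among supports of nonzero-support polynomials in the ideal. *)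

theory Defs
  imports Main "HOL-Library.Poly_Mapping"
begin

text \<open>Laurent polynomials K[x^{+-1}] in one variable are modelled as finitely supported
  functions int =>0 a (exponent to coefficient); the ring structure
  (convolution product) is the one from HOL-Library.Poly_Mapping.\<close>

definition is_ring_ideal :: "'r::comm_ring_1 set \<Rightarrow> bool" where
  "is_ring_ideal J \<longleftrightarrow> 0 \<in> J \<and> (\<forall>f\<in>J. \<forall>g\<in>J. f + g \<in> J) \<and> (\<forall>f\<in>J. \<forall>g. g * f \<in> J)"

text \<open>A polynomial over the Boolean semiring B = {inf, 0} (min, +) is determined by its
  support, a finite subset of Z. Tropical sum = union of supports, tropical product =
  Minkowski sum of supports, zero polynomial = empty set.\<close>

definition minkowski :: "int set \<Rightarrow> int set \<Rightarrow> int set" where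
  "minkowski A B = {a + b | a b. a \<in> A \<and> b \<in> B}"

definition trop :: "(int \<Rightarrow>\<^sub>0 'a::zero) \<Rightarrow> int set" where
  "trop F = Poly_Mapping.keys F"

text \<open>trop(J): the ideal of B[x^{+-1}] generated by all trop(F), F in J, i.e. all finite
  tropical sums of products g * trop(F_i).\<close>

definition trop_ideal :: "(int \<Rightarrow>\<^sub>0 'a::zero) set \<Rightarrow> int set set" where
  "trop_ideal J = {S. \<exists>n (g :: nat \<Rightarrow> int set) f.
      (\<forall>i<n. finite (g i) \<and> f i \<in> J) \<and> S = (\<Union>i<n. minkowski (g i) (trop (f i)))}"

definition circuits4 :: "int set set" where
  "circuits4 = {{u, v} | u v. u \<noteq> v \<and> (4::int) dvd (u - v)}
     \<union> {{u, v, w} | u v w. \<not> (4::int) dvd (u - v) \<and> \<not> (4::int) dvd (u - w)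
                          \<and> \<not> (4::int) dvd (v - w)}"

definition I4 :: "int set set" where
  "I4 = {\<Union>\<A> | \<A>. finite \<A> \<and> \<A> \<subseteq> circuits4}"

end

theory Submission
  imports Defs
begin

text \<open>If \<open>I = trop(J)\<close>, the circuit \<open>{0,1,2}\<close> of \<open>I\<close> forces some \<open>F \<in> J\<close> whose support is
  exactly three consecutive exponents \<open>{c, c+1, c+2}\<close>. In characteristic 2 squaring is additive,
  so \<open>F\<^sup>2 \<in> J\<close> has support \<open>{2c, 2c+2, 2c+4}\<close>. This set is not a union of circuits: the only
  exponent congruent to \<open>2c+2\<close> modulo 4 is \<open>2c+2\<close> itself, and the other two exponents are
  congruent to each other.\<close>

lemma poly_mapping_sum_single_keys:
  "F = (\<Sum>k\<in>Poly_Mapping.keys F. Poly_Mapping.single k (Poly_Mapping.lookup F k))"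
  by (rule poly_mapping_eqI) (simp add: lookup_sum lookup_single when_def in_keys_iff)

lemma keys_sum_single_inj_on:
  assumes "finite K" "inj_on h K" "\<And>k. k \<in> K \<Longrightarrow> c k \<noteq> 0"
  shows "Poly_Mapping.keys (\<Sum>k\<in>K. Poly_Mapping.single (h k) (c k)) = h ` K"
proof -
  have "Poly_Mapping.lookup (\<Sum>k\<in>K. Poly_Mapping.single (h k) (c k)) j
      = (if j \<in> h ` K then c (the_inv_into K h j) else 0)" for j
  proof (cases "j \<in> h ` K")
    case True
    then obtain k0 where "k0 \<in> K" "j = h k0" by blast
    then have "(\<Sum>k\<in>K. c k when h k = j) = (\<Sum>k\<in>K. c k when k = k0)"
      using assms(2) by (intro sum.cong) (auto simp: when_def inj_on_eq_iff)
    then show ?thesis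
      using \<open>k0 \<in> K\<close> \<open>j = h k0\<close> assms(1,2)
      by (simp add: lookup_sum lookup_single when_def the_inv_into_f_f)
  qed (auto simp: lookup_sum lookup_single when_def intro!: sum.neutral)
  then show ?thesis
    using assms(2,3) by (auto simp: in_keys_iff the_inv_into_f_f split: if_splits)
qed

lemma power2_sum_eq_sum_power2:
  fixes f :: "'b \<Rightarrow> 'r::comm_ring_1"
  assumes "(2::'r) = 0"
  shows "(\<Sum>i\<in>A. f i)^2 = (\<Sum>i\<in>A. f i ^ 2)"
proof (induction A rule: infinite_finite_induct)
  case (insert x A)
  have "(f x + (\<Sum>i\<in>A. f i))^2 = f x ^ 2 + (\<Sum>i\<in>A. f i)^2 + 2 * f x * (\<Sum>i\<in>A. f i)"
    by (simp add: power2_sum)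
  then show ?case using insert assms by simp
qed simp_all

lemma two_eq_0_poly_mapping:
  assumes "CHAR('a::comm_ring_1) = 2"
  shows "(2 :: 'b::comm_monoid_add \<Rightarrow>\<^sub>0 'a) = 0"
proof -
  have "(2::'a) = 0" using of_nat_CHAR[where 'a='a] assms by simp
  then show ?thesis by (metis single_numeral single_zero)
qed

lemma keys_square_char_2:
  fixes F :: "int \<Rightarrow>\<^sub>0 'a::idom"
  assumes "CHAR('a) = 2"
  shows "Poly_Mapping.keys (F * F) = (\<lambda>k. 2 * k) ` Poly_Mapping.keys F"
proof -
  have expansion: "(\<Sum>k\<in>Poly_Mapping.keys F. Poly_Mapping.single k (Poly_Mapping.lookup F k)) = F"
    by (rule poly_mapping_sum_single_keys[symmetric])
  have "F * F = (\<Sum>k\<in>Poly_Mapping.keys F. Poly_Mapping.single k (Poly_Mapping.lookup F k))^2"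
    unfolding expansion by (rule power2_eq_square[symmetric])
  also have "\<dots> = (\<Sum>k\<in>Poly_Mapping.keys F.
      Poly_Mapping.single (2 * k) (Poly_Mapping.lookup F k ^ 2))"
    unfolding power2_sum_eq_sum_power2[OF two_eq_0_poly_mapping[OF assms]]
    by (simp only: power2_eq_square mult_single mult_2)
  finally show ?thesis
    by (simp only:) (rule keys_sum_single_inj_on, auto simp: inj_on_def)
qed

lemma trop_in_trop_ideal:
  assumes "F \<in> J"
  shows "trop F \<in> trop_ideal J"
proof -
  have "trop F = (\<Union>i<Suc 0. minkowski {0} (trop F))"
    by (auto simp: minkowski_def)
  then show ?thesis
    unfolding trop_ideal_def using assms
    by (intro CollectI exI[of _ "Suc 0"] exI[of _ "\<lambda>_. {0}"] exI[of _ "\<lambda>_. F"]) simp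
qed

lemma trop_ideal_mem_covered_by_translate:
  assumes "S \<in> trop_ideal J" "x \<in> S"
  shows "\<exists>F\<in>J. \<exists>t. x \<in> (+) t ` trop F \<and> (+) t ` trop F \<subseteq> S"
proof -
  obtain n :: nat and g f where gf: "\<forall>i<n. finite (g i) \<and> f i \<in> J"
    and S: "S = (\<Union>i<n. minkowski (g i) (trop (f i)))"
    using assms(1) unfolding trop_ideal_def by blast
  then obtain i t where "i < n" "t \<in> g i" "x \<in> (+) t ` trop (f i)"
    using assms(2) unfolding minkowski_def by blast
  moreover have "(+) t ` trop (f i) \<subseteq> S"
    using \<open>i < n\<close> \<open>t \<in> g i\<close> unfolding S minkowski_def by blast
  ultimately show ?thesis
    using gf by blast
qed

lemma I4_mem_circuit:
  assumes "S \<in> I4" "x \<in> S"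
  shows "\<exists>C\<in>circuits4. x \<in> C \<and> C \<subseteq> S"
  using assms unfolding I4_def by blast

lemma consecutive_three_in_I4: "{c, c + 1, c + 2} \<in> I4"
proof -
  have "{c, c + 1, c + 2} \<in> circuits4"
    unfolding circuits4_def
    by (intro UnI2 CollectI exI[of _ c] exI[of _ "c + 1"] exI[of _ "c + 2"]) simp
  then show ?thesis
    unfolding I4_def by (intro CollectI exI[of _ "{{c, c + 1, c + 2}}"]) auto
qed

lemma circuit_subset_consecutive_three:
  assumes "C \<in> circuits4" "C \<subseteq> {c, c + 1, c + 2}"
  shows "C = {c, c + 1, c + 2}"
  using assms(1) unfolding circuits4_def
proof (elim UnE CollectE exE conjE)
  fix u v assume "C = {u, v}" "u \<noteq> v" "(4::int) dvd (u - v)"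
  with assms(2) show ?thesis by auto
next
  fix u v w
  assume C: "C = {u, v, w}" and "\<not> (4::int) dvd (u - v)" "\<not> (4::int) dvd (u - w)"
    "\<not> (4::int) dvd (v - w)"
  then have "u \<noteq> v" "u \<noteq> w" "v \<noteq> w" by auto
  moreover have "u \<in> {c, c + 1, c + 2}" "v \<in> {c, c + 1, c + 2}" "w \<in> {c, c + 1, c + 2}"
    using assms(2) C by auto
  ultimately show ?thesis
    unfolding C by (elim insertE emptyE) (simp_all add: insert_commute)
qed

lemma I4_subset_consecutive_three:
  assumes "S \<in> I4" "S \<noteq> {}" "S \<subseteq> {c, c + 1, c + 2}"
  shows "S = {c, c + 1, c + 2}"
  using I4_mem_circuit[OF assms(1)] circuit_subset_consecutive_three assms(2,3)
  by (metis all_not_in_conv subset_antisym subset_trans)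

lemma even_three_notin_I4: "{2 * c, 2 * c + 2, 2 * c + 4} \<notin> I4"
proof
  assume "{2 * c, 2 * c + 2, 2 * c + 4} \<in> I4"
  then obtain C where C: "C \<in> circuits4" "2 * c + 2 \<in> C" "C \<subseteq> {2 * c, 2 * c + 2, 2 * c + 4}"
    using I4_mem_circuit by blast
  from C(1) show False unfolding circuits4_def
  proof (elim UnE CollectE exE conjE)
    fix u v assume "C = {u, v}" "u \<noteq> v" "(4::int) dvd (u - v)"
    with C(2,3) show False by auto
  next
    fix u v w
    assume "C = {u, v, w}" "\<not> (4::int) dvd (u - v)" "\<not> (4::int) dvd (u - w)"
      "\<not> (4::int) dvd (v - w)"
    with C(3) show False by auto
  qed
qed

theorem mainTheorem11:
  assumes "CHAR('a::field) = 2"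
  shows "\<not> (\<exists>J :: (int \<Rightarrow>\<^sub>0 'a) set. is_ring_ideal J \<and> trop_ideal J = I4)"
proof
  assume "\<exists>J :: (int \<Rightarrow>\<^sub>0 'a) set. is_ring_ideal J \<and> trop_ideal J = I4"
  then obtain J :: "(int \<Rightarrow>\<^sub>0 'a) set" where J: "is_ring_ideal J" "trop_ideal J = I4"
    by blast
  have "{0, 1, 2} \<in> trop_ideal J"
    using consecutive_three_in_I4[of 0] J(2) by simp
  then obtain F t where "F \<in> J" "0 \<in> (+) t ` trop F" "(+) t ` trop F \<subseteq> {0, 1, 2}"
    using trop_ideal_mem_covered_by_translate by blast
  then have "trop F \<noteq> {}" "trop F \<subseteq> {- t, - t + 1, - t + 2}"
    by auto
  then have supp_F: "trop F = {- t, - t + 1, - t + 2}"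
    using I4_subset_consecutive_three trop_in_trop_ideal[OF \<open>F \<in> J\<close>] J(2) by blast
  have "F * F \<in> J"
    using J(1) \<open>F \<in> J\<close> unfolding is_ring_ideal_def by blast
  moreover have "trop (F * F) = {2 * - t, 2 * - t + 2, 2 * - t + 4}"
    using keys_square_char_2[OF assms, of F] supp_F by (simp add: trop_def)
  ultimately show False
    using trop_in_trop_ideal even_three_notin_I4 J(2) by metis
qed

end
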